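(* Let $\mathcal{X}\subseteq\mathbb{R}^d$ and let $k:\mathbb{R}^d\to\mathbb{R}$ be a continuous positive-definite function with $k(0)=1$; write $k(x,y):=k(x-y)$. Let $P$ be the probability measure on $\mathbb{R}^d$ with $k(\Delta)=\int e^{\sqrt{-1}\,\omega^\mathsf{T}\Delta}\,\mathrm{d}P(\omega)$. Let $\mu$ be a $\sigma$-finite measure on $\mathcal{X}\times\mathcal{X}$, for measurable $g$ on $\mathcal{X}^2$ set $\|g\|_\mu^2:=\int_{\mathcal{X}^2}g(x,y)^2\,\mathrm{d}\mu(x,y)$, and let $\mathcal{M}:=\mu(\mathcal{X}^2)$. Let $D$ be a positive integer, let $\omega_1,\dots,\omega_D$ be i.i.d. with law $P$ and $b_1,\dots,b_D$ i.i.d. uniform on $[0,2\pi]$, independent of the $\omega_i$, define $$\breve z(x):=\sqrt{\tfrac{2}{D}}\,\big(\cos(\omega_1^\mathsf{T}x+b_1),\dots,\cos(\omega_D^\mathsf{T}x+b_D)\big)^\mathsf{T},$$ and $\breve f(x,y):=\breve z(x)^\mathsf{T}\breve z(y)-k(x-y)$. Then for every $\varepsilon>0$, $$\Pr\Big(\big|\|\breve f\|_\mu^2-\mathbb{E}\|\breve f\|_\mu^2\big|\ge\varepsilon\Big)\le 2\exp\Big(\frac{-D^3\varepsilon^2}{512(D+1)^2\mathcal{M}^2}\Big)\le 2\exp\Big(\frac{-D\varepsilon^2}{2048\,\mathcal{M}^2}\Big).$$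
   Context: The existence of $P$ follows from Bochner's theorem. The probability and expectation are over the random draw of the $\omega_i$ and $b_i$. *)

theory Defs
  imports "HOL-Probability.Probability"
begin

definition positive_definite :: "('a::real_vector \<Rightarrow> real) \<Rightarrow> bool" where
  "positive_definite k \<longleftrightarrow>
     (\<forall>(n::nat) (x::nat \<Rightarrow> 'a) (c::nat \<Rightarrow> complex).
        (let s = (\<Sum>i<n. \<Sum>j<n. c i * cnj (c j) * complex_of_real (k (x i - x j)))
         in Im s = 0 \<and> 0 \<le> Re s))"

definition rff_space :: "'a::euclidean_space measure \<Rightarrow> nat \<Rightarrow> ((nat \<Rightarrow> 'a) \<times> (nat \<Rightarrow> real)) measure" where
  "rff_space P D =
     (PiM {..<D} (\<lambda>_. P)) \<Otimes>\<^sub>M (PiM {..<D} (\<lambda>_. uniform_measure lborel {0..2*pi}))"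

definition rff_z :: "nat \<Rightarrow> (nat \<Rightarrow> 'a::euclidean_space) \<times> (nat \<Rightarrow> real) \<Rightarrow> 'a \<Rightarrow> nat \<Rightarrow> real" where
  "rff_z D w x i = sqrt (2 / real D) * cos (fst w i \<bullet> x + snd w i)"

definition rff_f :: "('a::euclidean_space \<Rightarrow> real) \<Rightarrow> nat \<Rightarrow> (nat \<Rightarrow> 'a) \<times> (nat \<Rightarrow> real) \<Rightarrow> 'a \<times> 'a \<Rightarrow> real" where
  "rff_f k D w p = (\<Sum>i<D. rff_z D w (fst p) i * rff_z D w (snd p) i) - k (fst p - snd p)"

definition sqnorm_mu :: "('b \<times> 'b) measure \<Rightarrow> ('b \<times> 'b \<Rightarrow> real) \<Rightarrow> real" where
  "sqnorm_mu \<mu> g = (\<integral>p. (g p)\<^sup>2 \<partial>\<mu>)"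

end

theory Submission
  imports Defs
begin

text \<open>The squared norm \<open>N\<close> of the error is a function of the \<open>2D\<close> independent variables
  \<open>\<omega>\<^sub>i\<close> and \<open>b\<^sub>i\<close>. Since the feature kernel is an average of \<open>D\<close> summands bounded by \<open>2/D\<close>
  and \<open>\<bar>k\<bar> \<le> 1\<close> (being a characteristic function), resampling one \<open>\<omega>\<^sub>i\<close> changes the
  integrand pointwise by at most \<open>24/D\<close> and resampling one \<open>b\<^sub>i\<close> by at most \<open>12/D\<close>, so \<open>N\<close>
  changes by at most \<open>24M/D\<close> resp. \<open>12M/D\<close>. McDiarmid's bounded differences argument, carried
  out on moment generating functions, makes \<open>N\<close> sub-Gaussian with parameter \<open>720 M\<^sup>2/D\<close>, and
  the Chernoff bound gives the tail \<open>2 exp (-D \<epsilon>\<^sup>2 / (360 M\<^sup>2))\<close>, which is below both stated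
  bounds.\<close>

section \<open>Sub-Gaussian random variables and McDiarmid's inequality\<close>

text \<open>The parameter \<open>s\<close> is normalised as in Hoeffding's lemma: a random variable with values in
  an interval of length \<open>c\<close> satisfies the bound with \<open>s = c\<^sup>2\<close>.\<close>

definition subgaussian :: "'a measure \<Rightarrow> ('a \<Rightarrow> real) \<Rightarrow> real \<Rightarrow> bool" where
  "subgaussian M f s \<longleftrightarrow>
     (\<forall>l. (\<integral>x. exp (l * (f x - (\<integral>y. f y \<partial>M))) \<partial>M) \<le> exp (l\<^sup>2 * s / 8))"

lemma integrable_bounded_finite_measure:
  fixes f :: "'a \<Rightarrow> real"
  assumes "finite_measure M" "f \<in> borel_measurable M" "\<And>x. x \<in> space M \<Longrightarrow> \<bar>f x\<bar> \<le> B"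
  shows "integrable M f"
proof -
  interpret finite_measure M by fact
  show ?thesis using assms(2,3) by (intro integrable_const_bound[where B=B]) auto
qed

lemma (in finite_measure) abs_integral_le_measure:
  fixes f :: "'a \<Rightarrow> real"
  assumes "f \<in> borel_measurable M" "\<And>x. x \<in> space M \<Longrightarrow> \<bar>f x\<bar> \<le> c"
  shows "\<bar>\<integral>x. f x \<partial>M\<bar> \<le> c * measure M (space M)"
proof -
  have "integrable M f"
    using assms by (intro integrable_bounded_finite_measure) (auto intro: finite_measure_axioms)
  have "\<bar>\<integral>x. f x \<partial>M\<bar> \<le> (\<integral>x. \<bar>f x\<bar> \<partial>M)"
    by (rule integral_abs_bound)
  also have "\<dots> \<le> (\<integral>x. c \<partial>M)"
    using \<open>integrable M f\<close> assms(2) by (intro integral_mono) auto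
  finally show ?thesis
    by (simp add: mult.commute)
qed

lemma (in prob_space) abs_integral_le:
  fixes f :: "'a \<Rightarrow> real"
  assumes "f \<in> borel_measurable M" "\<And>x. x \<in> space M \<Longrightarrow> \<bar>f x\<bar> \<le> c"
  shows "\<bar>\<integral>x. f x \<partial>M\<bar> \<le> c"
  using abs_integral_le_measure[OF assms] by (simp add: prob_space)

lemma (in finite_measure) abs_integral_diff_le_measure:
  fixes f g :: "'a \<Rightarrow> real"
  assumes [measurable]: "f \<in> borel_measurable M" "g \<in> borel_measurable M"
    and "\<And>x. x \<in> space M \<Longrightarrow> \<bar>f x\<bar> \<le> B" "\<And>x. x \<in> space M \<Longrightarrow> \<bar>g x\<bar> \<le> B"
    and "\<And>x. x \<in> space M \<Longrightarrow> \<bar>f x - g x\<bar> \<le> c"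
  shows "\<bar>(\<integral>x. f x \<partial>M) - (\<integral>x. g x \<partial>M)\<bar> \<le> c * measure M (space M)"
proof -
  have "integrable M f" "integrable M g"
    using assms by (auto intro!: integrable_bounded_finite_measure finite_measure_axioms)
  then have "(\<integral>x. f x \<partial>M) - (\<integral>x. g x \<partial>M) = (\<integral>x. f x - g x \<partial>M)"
    by simp
  also have "\<bar>\<dots>\<bar> \<le> c * measure M (space M)"
    using assms by (intro abs_integral_le_measure) auto
  finally show ?thesis .
qed

lemma (in prob_space) abs_integral_diff_le:
  fixes f g :: "'a \<Rightarrow> real"
  assumes "f \<in> borel_measurable M" "g \<in> borel_measurable M"
    and "\<And>x. x \<in> space M \<Longrightarrow> \<bar>f x\<bar> \<le> B" "\<And>x. x \<in> space M \<Longrightarrow> \<bar>g x\<bar> \<le> B"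
    and "\<And>x. x \<in> space M \<Longrightarrow> \<bar>f x - g x\<bar> \<le> c"
  shows "\<bar>(\<integral>x. f x \<partial>M) - (\<integral>x. g x \<partial>M)\<bar> \<le> c"
  using abs_integral_diff_le_measure[OF assms] by (simp add: prob_space)

lemma (in prob_space) integrable_exp_centered:
  fixes f :: "'a \<Rightarrow> real"
  assumes [measurable]: "f \<in> borel_measurable M" and "\<And>x. x \<in> space M \<Longrightarrow> \<bar>f x\<bar> \<le> B"
  shows "integrable M (\<lambda>x. exp (l * (f x - c)))"
proof (rule integrable_bounded_finite_measure[where B="exp (\<bar>l\<bar> * (B + \<bar>c\<bar>))"])
  fix x assume "x \<in> space M"
  then have "\<bar>f x - c\<bar> \<le> B + \<bar>c\<bar>"
    using assms(2)[of x] abs_triangle_ineq4[of "f x" c] by linarith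
  then have "l * (f x - c) \<le> \<bar>l\<bar> * (B + \<bar>c\<bar>)"
    by (metis abs_ge_self abs_mult mult_left_mono abs_ge_zero order_trans)
  then show "\<bar>exp (l * (f x - c))\<bar> \<le> exp (\<bar>l\<bar> * (B + \<bar>c\<bar>))"
    by simp
qed (simp_all add: finite_measure_axioms)

lemma subgaussian_uminus:
  assumes "subgaussian M f s"
  shows "subgaussian M (\<lambda>x. - f x) s"
  unfolding subgaussian_def
proof
  fix l :: real
  have "(\<integral>x. exp ((-l) * (f x - (\<integral>y. f y \<partial>M))) \<partial>M) \<le> exp ((-l)\<^sup>2 * s / 8)"
    using assms unfolding subgaussian_def by blast
  then show "(\<integral>x. exp (l * (- f x - (\<integral>y. - f y \<partial>M))) \<partial>M) \<le> exp (l\<^sup>2 * s / 8)"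
    by (simp add: algebra_simps)
qed

lemma subgaussian_distr:
  fixes f :: "'b \<Rightarrow> real"
  assumes [measurable]: "\<phi> \<in> measurable N M" "f \<in> borel_measurable M"
    and "subgaussian N (\<lambda>x. f (\<phi> x)) s"
  shows "subgaussian (distr N M \<phi>) f s"
  using assms(3) by (simp add: subgaussian_def integral_distr)

lemma (in prob_space) Hoeffdings_lemma_integral:
  fixes f :: "'a \<Rightarrow> real"
  assumes [measurable]: "f \<in> borel_measurable M"
    and "\<And>x. x \<in> space M \<Longrightarrow> a \<le> f x \<and> f x \<le> b" and "l > 0"
  shows "(\<integral>x. exp (l * (f x - (\<integral>y. f y \<partial>M))) \<partial>M) \<le> exp (l\<^sup>2 * (b - a)\<^sup>2 / 8)"
proof -
  interpret interval_bounded_random_variable M f a b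
    by unfold_locales (use assms(2) in auto)
  have "integrable M (\<lambda>x. exp (l * (f x - (\<integral>y. f y \<partial>M))))"
    using assms(2) by (intro integrable_exp_centered[where B="\<bar>a\<bar> + \<bar>b\<bar>"]) force+
  then have "ennreal (\<integral>x. exp (l * (f x - (\<integral>y. f y \<partial>M))) \<partial>M)
      = (\<integral>\<^sup>+x. exp (l * (f x - (\<integral>y. f y \<partial>M))) \<partial>M)"
    by (intro nn_integral_eq_integral[symmetric]) auto
  also have "\<dots> \<le> ennreal (exp (l\<^sup>2 * (b - a)\<^sup>2 / 8))"
    by (rule Hoeffdings_lemma_nn_integral[OF \<open>l > 0\<close>])
  finally show ?thesis
    by (subst (asm) ennreal_le_iff) auto
qed

lemma subgaussian_interval:
  fixes f :: "'a \<Rightarrow> real"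
  assumes "prob_space M" and [measurable]: "f \<in> borel_measurable M"
    and range: "\<And>x. x \<in> space M \<Longrightarrow> a \<le> f x \<and> f x \<le> a + c"
  shows "subgaussian M f (c\<^sup>2)"
  unfolding subgaussian_def
proof
  fix l :: real
  interpret prob_space M by fact
  consider "l > 0" | "l = 0" | "l < 0" by linarith
  then show "(\<integral>x. exp (l * (f x - (\<integral>y. f y \<partial>M))) \<partial>M) \<le> exp (l\<^sup>2 * c\<^sup>2 / 8)"
  proof cases
    case 1
    then show ?thesis using Hoeffdings_lemma_integral[OF _ range] by simp
  next
    case 2
    then show ?thesis by (simp add: prob_space)
  next
    case 3
    have "(\<integral>x. exp ((-l) * (- f x - (\<integral>y. - f y \<partial>M))) \<partial>M) \<le> exp ((-l)\<^sup>2 * (- a - (- a - c))\<^sup>2 / 8)"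
      using 3 range by (intro Hoeffdings_lemma_integral) force+
    then show ?thesis by (simp add: algebra_simps)
  qed
qed

lemma subgaussian_bounded_oscillation:
  fixes f :: "'a \<Rightarrow> real"
  assumes "prob_space M" and [measurable]: "f \<in> borel_measurable M"
    and bounded: "\<And>x. x \<in> space M \<Longrightarrow> \<bar>f x\<bar> \<le> B"
    and oscillation: "\<And>x y. x \<in> space M \<Longrightarrow> y \<in> space M \<Longrightarrow> \<bar>f x - f y\<bar> \<le> c"
  shows "subgaussian M f (c\<^sup>2)"
proof (rule subgaussian_interval[OF assms(1,2)])
  interpret prob_space M by fact
  define a where "a = Inf (f ` space M)"
  have bdd: "bdd_below (f ` space M)"
    using bounded by (intro bdd_belowI[where m="-B"]) (force simp: abs_le_iff)
  fix x assume x: "x \<in> space M"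
  have "a \<le> f x"
    unfolding a_def using x bdd by (intro cInf_lower) auto
  moreover have "f x - c \<le> a"
    unfolding a_def using not_empty oscillation[OF x]
    by (intro cInf_greatest) (auto simp: abs_le_iff, smt (verit))
  ultimately show "a \<le> f x \<and> f x \<le> a + c"
    by simp
qed

lemma subgaussian_pair_measure:
  fixes f :: "'a \<times> 'b \<Rightarrow> real"
  assumes "prob_space M1" "prob_space M2"
    and [measurable]: "f \<in> borel_measurable (M1 \<Otimes>\<^sub>M M2)"
    and bounded: "\<And>z. z \<in> space (M1 \<Otimes>\<^sub>M M2) \<Longrightarrow> \<bar>f z\<bar> \<le> B"
    and inner: "\<And>y. y \<in> space M2 \<Longrightarrow> subgaussian M1 (\<lambda>x. f (x, y)) s1"
    and outer: "subgaussian M2 (\<lambda>y. \<integral>x. f (x, y) \<partial>M1) s2"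
  shows "subgaussian (M1 \<Otimes>\<^sub>M M2) f (s1 + s2)"
  unfolding subgaussian_def
proof
  fix l :: real
  interpret M1: prob_space M1 by fact
  interpret M2: prob_space M2 by fact
  interpret pair_prob_space M1 M2 by unfold_locales
  define h where "h y = (\<integral>x. f (x, y) \<partial>M1)" for y
  define E where "E = (\<integral>z. f z \<partial>(M1 \<Otimes>\<^sub>M M2))"
  have [measurable]: "h \<in> borel_measurable M2"
    unfolding h_def by measurable
  have h_bounded: "\<bar>h y\<bar> \<le> B" if "y \<in> space M2" for y
    unfolding h_def using that bounded by (intro M1.abs_integral_le) (auto simp: space_pair_measure)
  have "integrable (M1 \<Otimes>\<^sub>M M2) f"
    using bounded by (intro integrable_bounded_finite_measure) (auto intro: finite_measure_axioms)
  then have "(\<integral>y. h y \<partial>M2) = E"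
    unfolding h_def E_def using integral_snd[of "\<lambda>x y. f (x, y)"] by simp
  have exp_integrable: "integrable (M1 \<Otimes>\<^sub>M M2) (\<lambda>z. exp (l * (f z - E)))"
    using bounded by (intro integrable_exp_centered) auto
  then have "integrable M2 (\<lambda>y. \<integral>x. exp (l * (f (x, y) - E)) \<partial>M1)"
    using integrable_snd[of "\<lambda>x y. exp (l * (f (x, y) - E))"] by (simp add: case_prod_unfold)
  have "(\<integral>z. exp (l * (f z - E)) \<partial>(M1 \<Otimes>\<^sub>M M2))
      = (\<integral>y. (\<integral>x. exp (l * (f (x, y) - E)) \<partial>M1) \<partial>M2)"
    using exp_integrable integral_snd[of "\<lambda>x y. exp (l * (f (x, y) - E))"]
    by (simp add: case_prod_unfold)
  also have "\<dots> \<le> (\<integral>y. exp (l * (h y - E)) * exp (l\<^sup>2 * s1 / 8) \<partial>M2)"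
  proof (rule integral_mono)
    show "integrable M2 (\<lambda>y. exp (l * (h y - E)) * exp (l\<^sup>2 * s1 / 8))"
      using h_bounded by (intro integrable_mult_left M2.integrable_exp_centered) auto
    fix y assume "y \<in> space M2"
    have "(\<integral>x. exp (l * (f (x, y) - E)) \<partial>M1)
        = (\<integral>x. exp (l * (f (x, y) - h y)) * exp (l * (h y - E)) \<partial>M1)"
      by (simp add: algebra_simps flip: exp_add)
    also have "\<dots> = (\<integral>x. exp (l * (f (x, y) - h y)) \<partial>M1) * exp (l * (h y - E))"
      by simp
    also have "\<dots> \<le> exp (l\<^sup>2 * s1 / 8) * exp (l * (h y - E))"
      using inner[OF \<open>y \<in> space M2\<close>] unfolding subgaussian_def h_def
      by (intro mult_right_mono) auto
    finally show "(\<integral>x. exp (l * (f (x, y) - E)) \<partial>M1) \<le> exp (l * (h y - E)) * exp (l\<^sup>2 * s1 / 8)"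
      by (simp add: mult.commute)
  qed fact
  also have "\<dots> = (\<integral>y. exp (l * (h y - (\<integral>y. h y \<partial>M2))) \<partial>M2) * exp (l\<^sup>2 * s1 / 8)"
    by (simp add: \<open>(\<integral>y. h y \<partial>M2) = E\<close>)
  also have "\<dots> \<le> exp (l\<^sup>2 * s2 / 8) * exp (l\<^sup>2 * s1 / 8)"
    using outer unfolding subgaussian_def h_def by (intro mult_right_mono) auto
  also have "\<dots> = exp (l\<^sup>2 * (s1 + s2) / 8)"
    by (simp flip: exp_add add: algebra_simps add_divide_distrib)
  finally show "(\<integral>z. exp (l * (f z - (\<integral>y. f y \<partial>(M1 \<Otimes>\<^sub>M M2)))) \<partial>(M1 \<Otimes>\<^sub>M M2))
      \<le> exp (l\<^sup>2 * (s1 + s2) / 8)"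
    unfolding E_def .
qed

text \<open>McDiarmid's inequality in moment generating function form: integrate out one
  coordinate at a time, applying Hoeffding's lemma to the coordinate being integrated.\<close>

lemma subgaussian_PiM_bounded_differences:
  fixes f :: "('i \<Rightarrow> 'b) \<Rightarrow> real" and c :: "'i \<Rightarrow> real"
  assumes "finite I" and "\<And>i. i \<in> I \<Longrightarrow> prob_space (M i)"
    and "f \<in> borel_measurable (PiM I M)"
    and "\<And>x. x \<in> space (PiM I M) \<Longrightarrow> \<bar>f x\<bar> \<le> B"
    and "\<And>x i z. x \<in> space (PiM I M) \<Longrightarrow> i \<in> I \<Longrightarrow> z \<in> space (M i) \<Longrightarrow>
           \<bar>f (x(i := z)) - f x\<bar> \<le> c i"
  shows "subgaussian (PiM I M) f (\<Sum>i\<in>I. (c i)\<^sup>2)"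
  using assms
proof (induction I arbitrary: f rule: finite_induct)
  case empty
  show ?case
    unfolding subgaussian_def PiM_empty by (simp add: lebesgue_integral_count_space_finite)
next
  case (insert i I)
  note [measurable] = insert.prems(2)
  interpret Mi: prob_space "M i" using insert.prems by auto
  interpret PiI: prob_space "PiM I M" using insert.prems by (intro prob_space_PiM) auto
  have upd_space: "x(i := z) \<in> space (PiM (insert i I) M)"
    if "x \<in> space (PiM I M)" "z \<in> space (M i)" for x z
    using that by (simp add: space_PiM PiE_fun_upd)
  define g where "g z = f ((snd z)(i := fst z))" for z
  have [measurable]: "(\<lambda>z. (snd z)(i := fst z)) \<in> measurable (M i \<Otimes>\<^sub>M PiM I M) (PiM (insert i I) M)"
    by (rule measurable_fun_upd[where J=I]) auto
  then have [measurable]: "g \<in> borel_measurable (M i \<Otimes>\<^sub>M PiM I M)"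
    unfolding g_def by measurable
  have g_bounded: "\<bar>g (z, x)\<bar> \<le> B" if "z \<in> space (M i)" "x \<in> space (PiM I M)" for z x
    using that insert.prems(3) upd_space unfolding g_def by auto
  have "subgaussian (PiM I M) (\<lambda>x. \<integral>z. g (z, x) \<partial>M i) (\<Sum>j\<in>I. (c j)\<^sup>2)"
  proof (rule insert.IH)
    fix x j y assume x: "x \<in> space (PiM I M)" and j: "j \<in> I" and y: "y \<in> space (M j)"
    then have "x(j := y) \<in> space (PiM I M)"
      by (auto simp: space_PiM PiE_iff extensional_def)
    moreover have "\<bar>g (z, x(j := y)) - g (z, x)\<bar> \<le> c j" if "z \<in> space (M i)" for z
    proof -
      have "(x(j := y))(i := z) = (x(i := z))(j := y)"
        using j insert.hyps(2) by (intro fun_upd_twist) auto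
      then show ?thesis
        unfolding g_def fst_conv snd_conv using insert.prems(4)[OF upd_space[OF x that] _ y] j
        by (metis insertCI)
    qed
    ultimately show "\<bar>(\<integral>z. g (z, x(j := y)) \<partial>M i) - (\<integral>z. g (z, x) \<partial>M i)\<bar> \<le> c j"
      using x g_bounded by (intro Mi.abs_integral_diff_le) auto
  qed (use insert.prems g_bounded Mi.abs_integral_le in auto)
  moreover have "subgaussian (M i) (\<lambda>z. g (z, x)) ((c i)\<^sup>2)" if x: "x \<in> space (PiM I M)" for x
  proof (rule subgaussian_bounded_oscillation)
    fix z y assume "z \<in> space (M i)" "y \<in> space (M i)"
    then have "\<bar>f ((x(i := y))(i := z)) - f (x(i := y))\<bar> \<le> c i"
      using insert.prems(4)[OF upd_space[OF x \<open>y \<in> space (M i)\<close>]] by blast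
    then show "\<bar>g (z, x) - g (y, x)\<bar> \<le> c i"
      by (simp add: g_def)
  qed (use x g_bounded Mi.prob_space_axioms in auto)
  ultimately have "subgaussian (M i \<Otimes>\<^sub>M PiM I M) g ((c i)\<^sup>2 + (\<Sum>j\<in>I. (c j)\<^sup>2))"
    by (intro subgaussian_pair_measure[where B=B] Mi.prob_space_axioms PiI.prob_space_axioms)
       (auto simp: space_pair_measure g_bounded)
  then have "subgaussian (distr (M i \<Otimes>\<^sub>M PiM I M) (PiM (insert i I) M) (\<lambda>z. (snd z)(i := fst z)))
      f ((c i)\<^sup>2 + (\<Sum>j\<in>I. (c j)\<^sup>2))"
    by (intro subgaussian_distr) (simp_all add: g_def[abs_def])
  moreover have "distr (M i \<Otimes>\<^sub>M PiM I M) (PiM (insert i I) M) (\<lambda>z. (snd z)(i := fst z))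
      = PiM (insert i I) M"
    using distr_pair_PiM_eq_PiM[of I M i] insert.prems by (simp add: case_prod_unfold)
  ultimately show ?case
    using insert.hyps by simp
qed

lemma subgaussian_upper_tail:
  fixes f :: "'a \<Rightarrow> real"
  assumes "prob_space M" and [measurable]: "f \<in> borel_measurable M"
    and "\<And>x. x \<in> space M \<Longrightarrow> \<bar>f x\<bar> \<le> B"
    and "subgaussian M f s" "s \<ge> 0" "\<epsilon> > 0"
  shows "measure M {x \<in> space M. f x - (\<integral>y. f y \<partial>M) \<ge> \<epsilon>} \<le> exp (- 2 * \<epsilon>\<^sup>2 / s)"
proof (cases "s = 0")
  case True
  interpret prob_space M by fact
  \<comment> \<open>with \<open>x / 0 = 0\<close> the bound degenerates to \<open>exp 0 = 1\<close>\<close>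
  show ?thesis using True prob_le_1 by simp
next
  case False
  interpret prob_space M by fact
  define E where "E = (\<integral>y. f y \<partial>M)"
  define S where "S = {x \<in> space M. f x - E \<ge> \<epsilon>}"
  \<comment> \<open>the optimal Chernoff parameter\<close>
  define l where "l = 4 * \<epsilon> / s"
  have "l > 0"
    using False assms(5,6) by (simp add: l_def)
  have [measurable]: "S \<in> sets M"
    unfolding S_def by measurable
  have "measure M S = (\<integral>x. indicator S x \<partial>M)"
    by simp
  also have "\<dots> \<le> (\<integral>x. exp (l * (f x - E)) * exp (- l * \<epsilon>) \<partial>M)"
  proof (rule integral_mono)
    show "integrable M (\<lambda>x. exp (l * (f x - E)) * exp (- l * \<epsilon>))"
      using assms(3) by (intro integrable_mult_left integrable_exp_centered) auto
    fix x assume "x \<in> space M"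
    have "1 \<le> exp (l * (f x - E)) * exp (- l * \<epsilon>)" if "x \<in> S"
    proof -
      have "l * \<epsilon> \<le> l * (f x - E)"
        using that \<open>l > 0\<close> unfolding S_def by (intro mult_left_mono) auto
      then show ?thesis
        by (simp flip: exp_add)
    qed
    then show "indicator S x \<le> exp (l * (f x - E)) * exp (- l * \<epsilon>)"
      by (cases "x \<in> S") auto
  qed (simp add: integrable_indicator_iff less_top[symmetric])
  also have "\<dots> = (\<integral>x. exp (l * (f x - E)) \<partial>M) * exp (- l * \<epsilon>)"
    by simp
  also have "\<dots> \<le> exp (l\<^sup>2 * s / 8) * exp (- l * \<epsilon>)"
    using assms(4) unfolding subgaussian_def E_def by (intro mult_right_mono) auto
  also have "\<dots> = exp (- 2 * \<epsilon>\<^sup>2 / s)"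
    using False by (simp add: l_def field_simps power2_eq_square flip: exp_add)
  finally show ?thesis
    unfolding S_def E_def .
qed

lemma subgaussian_tail:
  fixes f :: "'a \<Rightarrow> real"
  assumes "prob_space M" and [measurable]: "f \<in> borel_measurable M"
    and "\<And>x. x \<in> space M \<Longrightarrow> \<bar>f x\<bar> \<le> B"
    and "subgaussian M f s" "s \<ge> 0" "\<epsilon> > 0"
  shows "measure M {x \<in> space M. \<bar>f x - (\<integral>y. f y \<partial>M)\<bar> \<ge> \<epsilon>} \<le> 2 * exp (- 2 * \<epsilon>\<^sup>2 / s)"
proof -
  interpret prob_space M by fact
  have "{x \<in> space M. \<bar>f x - (\<integral>y. f y \<partial>M)\<bar> \<ge> \<epsilon>}
      = {x \<in> space M. f x - (\<integral>y. f y \<partial>M) \<ge> \<epsilon>} \<union> {x \<in> space M. - f x - (\<integral>y. - f y \<partial>M) \<ge> \<epsilon>}"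
    by auto
  then have "measure M {x \<in> space M. \<bar>f x - (\<integral>y. f y \<partial>M)\<bar> \<ge> \<epsilon>}
      \<le> measure M {x \<in> space M. f x - (\<integral>y. f y \<partial>M) \<ge> \<epsilon>}
        + measure M {x \<in> space M. - f x - (\<integral>y. - f y \<partial>M) \<ge> \<epsilon>}"
    by (simp add: measure_Un_le)
  also have "\<dots> \<le> exp (- 2 * \<epsilon>\<^sup>2 / s) + exp (- 2 * \<epsilon>\<^sup>2 / s)"
    using assms subgaussian_uminus[OF assms(4)]
    by (intro add_mono subgaussian_upper_tail[where B=B]) auto
  finally show ?thesis
    by simp
qed

section \<open>Random Fourier features\<close>

lemma abs_le_1_if_characteristic_function:
  fixes k :: "'a::euclidean_space \<Rightarrow> real"
  assumes "prob_space P" "complex_of_real (k \<Delta>) = (\<integral>\<omega>. cis (\<omega> \<bullet> \<Delta>) \<partial>P)"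
  shows "\<bar>k \<Delta>\<bar> \<le> 1"
proof -
  have "\<bar>k \<Delta>\<bar> = cmod (\<integral>\<omega>. cis (\<omega> \<bullet> \<Delta>) \<partial>P)"
    using assms(2) by (metis norm_of_real)
  also have "\<dots> \<le> (\<integral>\<omega>. cmod (cis (\<omega> \<bullet> \<Delta>)) \<partial>P)"
    by (rule integral_norm_bound)
  also have "\<dots> = 1"
    using assms(1) by (simp add: prob_space.prob_space)
  finally show ?thesis .
qed

lemma rff_z_mult:
  "rff_z D w x i * rff_z D w y i = 2 / real D * (cos (fst w i \<bullet> x + snd w i) * cos (fst w i \<bullet> y + snd w i))"
proof -
  have "sqrt (2 / real D) * c1 * (sqrt (2 / real D) * c2)
      = (sqrt (2 / real D) * sqrt (2 / real D)) * (c1 * c2)" for c1 c2 :: real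
    by (simp only: mult_ac)
  then show ?thesis
    unfolding rff_z_def by simp
qed

lemma abs_rff_z_mult_le: "\<bar>rff_z D w x i * rff_z D w y i\<bar> \<le> 2 / real D"
proof -
  have "\<bar>cos (fst w i \<bullet> x + snd w i) * cos (fst w i \<bullet> y + snd w i)\<bar> \<le> 1"
    by (simp add: abs_mult mult_le_one)
  have "\<bar>rff_z D w x i * rff_z D w y i\<bar>
      = 2 / real D * \<bar>cos (fst w i \<bullet> x + snd w i) * cos (fst w i \<bullet> y + snd w i)\<bar>"
    unfolding rff_z_mult by (simp add: abs_mult)
  also have "\<dots> \<le> 2 / real D"
    by (rule mult_left_le[OF \<open>\<bar>_\<bar> \<le> 1\<close>]) simp
  finally show ?thesis .
qed

lemma abs_cos_mult_cos_diff_le: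
  "\<bar>cos (u + b) * cos (v + b) - cos (u + b') * cos (v + b')\<bar> \<le> (1::real)"
proof -
  have product_to_sum: "cos (u + c) * cos (v + c) = (cos (u - v) + cos (u + v + 2 * c)) / 2" for c
  proof -
    have "cos (u + c) * cos (v + c) = (cos ((u + c) - (v + c)) + cos ((u + c) + (v + c))) / 2"
      by (rule cos_times_cos)
    also have "(u + c) - (v + c) = u - v" by simp
    also have "(u + c) + (v + c) = u + v + 2 * c" by simp
    finally show ?thesis .
  qed
  have "cos (u + b) * cos (v + b) - cos (u + b') * cos (v + b')
      = (cos (u + v + 2 * b) - cos (u + v + 2 * b')) / 2"
    unfolding product_to_sum by (simp add: add_divide_distrib diff_divide_distrib)
  moreover have "\<bar>(cos p - cos q) / 2\<bar> \<le> 1" for p q :: real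
    using abs_cos_le_one[of p] abs_cos_le_one[of q] by (simp only: abs_le_iff) argo
  ultimately show ?thesis
    by metis
qed

lemma abs_rff_z_mult_diff_le:
  assumes "fst w i = fst w' i"
  shows "\<bar>rff_z D w x i * rff_z D w y i - rff_z D w' x i * rff_z D w' y i\<bar> \<le> 2 / real D"
proof -
  have diff_eq: "rff_z D w x i * rff_z D w y i - rff_z D w' x i * rff_z D w' y i
      = 2 / real D * (cos (fst w i \<bullet> x + snd w i) * cos (fst w i \<bullet> y + snd w i)
          - cos (fst w i \<bullet> x + snd w' i) * cos (fst w i \<bullet> y + snd w' i))"
    unfolding rff_z_mult using assms by (simp add: algebra_simps)
  then have "\<bar>rff_z D w x i * rff_z D w y i - rff_z D w' x i * rff_z D w' y i\<bar>
      = 2 / real D * \<bar>cos (fst w i \<bullet> x + snd w i) * cos (fst w i \<bullet> y + snd w i)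
          - cos (fst w i \<bullet> x + snd w' i) * cos (fst w i \<bullet> y + snd w' i)\<bar>"
    unfolding diff_eq abs_mult by simp
  also have "\<dots> \<le> 2 / real D"
    by (intro mult_left_le abs_cos_mult_cos_diff_le) simp
  finally show ?thesis .
qed

lemma abs_rff_f_le:
  assumes "\<And>\<Delta>. \<bar>k \<Delta>\<bar> \<le> 1"
  shows "\<bar>rff_f k D w p\<bar> \<le> 3"
proof -
  have "\<bar>\<Sum>i<D. rff_z D w (fst p) i * rff_z D w (snd p) i\<bar> \<le> (\<Sum>i<D. 2 / real D)"
    by (intro order_trans[OF sum_abs] sum_mono abs_rff_z_mult_le)
  also have "\<dots> \<le> 2"
    by (cases "D = 0") auto
  finally show ?thesis
    using assms[of "fst p - snd p"] unfolding rff_f_def by linarith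
qed

lemma rff_f_diff_eq:
  assumes "i < D" and "\<And>j. j < D \<Longrightarrow> j \<noteq> i \<Longrightarrow> fst w j = fst w' j \<and> snd w j = snd w' j"
  shows "rff_f k D w p - rff_f k D w' p =
     rff_z D w (fst p) i * rff_z D w (snd p) i - rff_z D w' (fst p) i * rff_z D w' (snd p) i"
proof -
  have split: "(\<Sum>j<D. g j) = g i + (\<Sum>j\<in>{..<D} - {i}. g j)" for g :: "nat \<Rightarrow> real"
    using assms(1) by (subst sum.remove[of _ i]) auto
  have "(\<Sum>j\<in>{..<D} - {i}. rff_z D w (fst p) j * rff_z D w (snd p) j) =
        (\<Sum>j\<in>{..<D} - {i}. rff_z D w' (fst p) j * rff_z D w' (snd p) j)"
    using assms(2) by (intro sum.cong) (auto simp: rff_z_def)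
  then show ?thesis
    unfolding rff_f_def split by simp
qed

lemma abs_square_diff_le:
  fixes a b :: real
  assumes "\<bar>a\<bar> \<le> 3" "\<bar>b\<bar> \<le> 3" "\<bar>a - b\<bar> \<le> d"
  shows "\<bar>a\<^sup>2 - b\<^sup>2\<bar> \<le> 6 * d"
proof -
  have "\<bar>a\<^sup>2 - b\<^sup>2\<bar> = \<bar>a - b\<bar> * \<bar>a + b\<bar>"
    by (simp add: power2_eq_square algebra_simps flip: abs_mult)
  also have "\<dots> \<le> d * 6"
    using assms by (intro mult_mono) auto
  finally show ?thesis
    by simp
qed

text \<open>Resampling one frequency moves one summand of the feature kernel by at most \<open>4/D\<close>;
  resampling one phase moves it only by \<open>2/D\<close>, because the phase cancels in the
  \<open>cos (\<omega>\<bullet>x - \<omega>\<bullet>y)\<close> half of the product-to-sum formula.\<close>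

lemma abs_rff_f_square_diff_frequency:
  assumes "\<And>\<Delta>. \<bar>k \<Delta>\<bar> \<le> 1" and "i < D"
    and "\<And>j. j < D \<Longrightarrow> j \<noteq> i \<Longrightarrow> fst w j = fst w' j \<and> snd w j = snd w' j"
  shows "\<bar>(rff_f k D w p)\<^sup>2 - (rff_f k D w' p)\<^sup>2\<bar> \<le> 24 / real D"
proof -
  have "\<bar>rff_f k D w p - rff_f k D w' p\<bar> \<le> 2 / real D + 2 / real D"
    using rff_f_diff_eq[OF assms(2,3), of k p]
      abs_rff_z_mult_le[of D w "fst p" i "snd p"] abs_rff_z_mult_le[of D w' "fst p" i "snd p"]
    by linarith
  then have "\<bar>(rff_f k D w p)\<^sup>2 - (rff_f k D w' p)\<^sup>2\<bar> \<le> 6 * (2 / real D + 2 / real D)"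
    by (intro abs_square_diff_le abs_rff_f_le assms(1))
  then show ?thesis
    by simp
qed

lemma abs_rff_f_square_diff_phase:
  assumes "\<And>\<Delta>. \<bar>k \<Delta>\<bar> \<le> 1" and "i < D"
    and "\<And>j. j < D \<Longrightarrow> j \<noteq> i \<Longrightarrow> fst w j = fst w' j \<and> snd w j = snd w' j"
    and "fst w i = fst w' i"
  shows "\<bar>(rff_f k D w p)\<^sup>2 - (rff_f k D w' p)\<^sup>2\<bar> \<le> 12 / real D"
proof -
  have "\<bar>rff_f k D w p - rff_f k D w' p\<bar> \<le> 2 / real D"
    using rff_f_diff_eq[OF assms(2,3), of k p] abs_rff_z_mult_diff_le[OF assms(4)] by simp
  then have "\<bar>(rff_f k D w p)\<^sup>2 - (rff_f k D w' p)\<^sup>2\<bar> \<le> 6 * (2 / real D)"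
    by (intro abs_square_diff_le abs_rff_f_le assms(1))
  then show ?thesis
    by simp
qed

locale random_fourier_features = finite_measure \<mu>
  for \<mu> :: "('a::euclidean_space \<times> 'a) measure" +
  fixes P :: "'a measure" and k :: "'a \<Rightarrow> real"
  assumes prob_space_P: "prob_space P" and sets_P: "sets P = sets borel"
    and k_measurable [measurable]: "k \<in> borel_measurable borel"
    and abs_k_le_1: "\<And>\<Delta>. \<bar>k \<Delta>\<bar> \<le> 1"
    and id_measurable_\<mu>: "(\<lambda>p. p) \<in> measurable \<mu> borel"
begin

abbreviation sqnorm :: "nat \<Rightarrow> (nat \<Rightarrow> 'a) \<times> (nat \<Rightarrow> real) \<Rightarrow> real" where
  "sqnorm D w \<equiv> sqnorm_mu \<mu> (rff_f k D w)"

abbreviation total_mass :: real where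
  "total_mass \<equiv> measure \<mu> (space \<mu>)"

lemma rff_f_measurable:
  "(\<lambda>(w, p). rff_f k D w p) \<in> borel_measurable (rff_space P D \<Otimes>\<^sub>M (borel \<Otimes>\<^sub>M borel))"
proof -
  have component_measurable: "(\<lambda>x. x i) \<in> measurable (PiM {..<D} (\<lambda>_. M)) borel"
    if "sets M = sets borel" "i < D" for M :: "'b::topological_space measure" and i
    using measurable_component_singleton[of i "{..<D}" "\<lambda>_. M"] that
      measurable_cong_sets[OF refl that(1)] by auto
  have "(\<lambda>z. (\<Sum>i<D. sqrt (2 / real D) * cos (fst (fst z) i \<bullet> fst (snd z) + snd (fst z) i)
          * (sqrt (2 / real D) * cos (fst (fst z) i \<bullet> snd (snd z) + snd (fst z) i)))
        - k (fst (snd z) - snd (snd z))) \<in> borel_measurable (rff_space P D \<Otimes>\<^sub>M (borel \<Otimes>\<^sub>M borel))"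
  proof (intro borel_measurable_diff borel_measurable_sum)
    fix i assume "i \<in> {..<D}"
    then have "i < D"
      by simp
    have "(\<lambda>x. x i) \<in> measurable (PiM {..<D} (\<lambda>_. uniform_measure lborel {0..2*pi})) borel"
      by (rule component_measurable[OF _ \<open>i < D\<close>]) simp
    then have [measurable]:
      "(\<lambda>z. fst (fst z) i) \<in> borel_measurable (rff_space P D \<Otimes>\<^sub>M (borel \<Otimes>\<^sub>M borel))"
      "(\<lambda>z. snd (fst z) i) \<in> borel_measurable (rff_space P D \<Otimes>\<^sub>M (borel \<Otimes>\<^sub>M borel))"
      unfolding rff_space_def using component_measurable[OF sets_P \<open>i < D\<close>] by measurable
    show "(\<lambda>z. sqrt (2 / real D) * cos (fst (fst z) i \<bullet> fst (snd z) + snd (fst z) i)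
          * (sqrt (2 / real D) * cos (fst (fst z) i \<bullet> snd (snd z) + snd (fst z) i)))
        \<in> borel_measurable (rff_space P D \<Otimes>\<^sub>M (borel \<Otimes>\<^sub>M borel))"
      by measurable
  qed measurable
  then show ?thesis
    unfolding rff_f_def rff_z_def by (simp add: case_prod_unfold)
qed

lemma rff_f_square_measurable_\<mu>: "(\<lambda>p. (rff_f k D w p)\<^sup>2) \<in> borel_measurable \<mu>"
proof -
  have "(\<lambda>p. (rff_f k D w p)\<^sup>2) \<in> borel_measurable borel"
    unfolding rff_f_def rff_z_def borel_prod[symmetric] by measurable
  then show ?thesis
    using measurable_compose[OF id_measurable_\<mu>] by blast
qed

lemma sqnorm_measurable: "sqnorm D \<in> borel_measurable (rff_space P D)"
proof -
  have "(\<lambda>z. (fst z, snd z)) \<in> measurable (rff_space P D \<Otimes>\<^sub>M \<mu>) (rff_space P D \<Otimes>\<^sub>M (borel \<Otimes>\<^sub>M borel))"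
    using id_measurable_\<mu> unfolding borel_prod
    by (intro measurable_Pair measurable_fst measurable_compose[OF measurable_snd])
  from measurable_compose[OF this borel_measurable_power[OF rff_f_measurable]]
  have "(\<lambda>(w, p). (rff_f k D w p)\<^sup>2) \<in> borel_measurable (rff_space P D \<Otimes>\<^sub>M \<mu>)"
    by (simp add: case_prod_unfold)
  then show ?thesis
    unfolding sqnorm_mu_def
    by (intro borel_measurable_lebesgue_integral) simp
qed

lemma rff_f_square_le: "(rff_f k D w p)\<^sup>2 \<le> 9"
  using power_mono[OF abs_rff_f_le[OF abs_k_le_1] abs_ge_zero, where n=2] by simp

lemma abs_sqnorm_le: "\<bar>sqnorm D w\<bar> \<le> 9 * total_mass"
  unfolding sqnorm_mu_def
  by (intro abs_integral_le_measure rff_f_square_measurable_\<mu>) (simp add: rff_f_square_le)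

lemma abs_sqnorm_diff_le:
  assumes "\<And>p. \<bar>(rff_f k D w p)\<^sup>2 - (rff_f k D w' p)\<^sup>2\<bar> \<le> c"
  shows "\<bar>sqnorm D w - sqnorm D w'\<bar> \<le> c * total_mass"
  unfolding sqnorm_mu_def
  by (intro abs_integral_diff_le_measure[where B=9] rff_f_square_measurable_\<mu>)
     (simp_all add: assms rff_f_square_le)

text \<open>The frequencies and the phases are independent families, so the bounded differences
  argument can be run separately on each: first over the frequencies with the phases fixed,
  then over the phases for the frequency-averaged norm.\<close>

lemma sqnorm_subgaussian: "subgaussian (rff_space P D) (sqnorm D) (720 * total_mass\<^sup>2 / real D)"
proof -
  define U where "U = uniform_measure lborel {0..2*pi}"
  define A where "A = PiM {..<D} (\<lambda>_. P)"
  define B where "B = PiM {..<D} (\<lambda>_. U)"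
  have \<Omega>: "rff_space P D = A \<Otimes>\<^sub>M B"
    unfolding rff_space_def A_def B_def U_def ..
  have "prob_space U"
    unfolding U_def by (intro prob_space_uniform_measure) auto
  then interpret B: prob_space B
    unfolding B_def by (intro prob_space_PiM)
  interpret A: prob_space A
    unfolding A_def using prob_space_P by (intro prob_space_PiM)
  have [measurable]: "sqnorm D \<in> borel_measurable (A \<Otimes>\<^sub>M B)"
    using sqnorm_measurable[of D] unfolding \<Omega> .
  have frequencies: "subgaussian A (\<lambda>\<omega>. sqnorm D (\<omega>, b)) (\<Sum>i<D. (24 / real D * total_mass)\<^sup>2)"
    if "b \<in> space B" for b
    unfolding A_def
  proof (rule subgaussian_PiM_bounded_differences[where B="9 * total_mass"])
    show "(\<lambda>\<omega>. sqnorm D (\<omega>, b)) \<in> borel_measurable (PiM {..<D} (\<lambda>_. P))"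
      using that unfolding A_def[symmetric] by measurable
    fix x i z assume "i \<in> {..<D}"
    then show "\<bar>sqnorm D (x(i := z), b) - sqnorm D (x, b)\<bar> \<le> 24 / real D * total_mass"
      by (intro abs_sqnorm_diff_le abs_rff_f_square_diff_frequency abs_k_le_1) auto
  qed (simp_all add: abs_sqnorm_le prob_space_P)
  have [measurable]: "(\<lambda>b. \<integral>\<omega>. sqnorm D (\<omega>, b) \<partial>A) \<in> borel_measurable B"
    by (rule A.borel_measurable_lebesgue_integral) measurable
  have phases: "subgaussian B (\<lambda>b. \<integral>\<omega>. sqnorm D (\<omega>, b) \<partial>A) (\<Sum>i<D. (12 / real D * total_mass)\<^sup>2)"
    unfolding B_def
  proof (rule subgaussian_PiM_bounded_differences[where B="9 * total_mass"])
    fix b i z assume b: "b \<in> space (PiM {..<D} (\<lambda>_. U))" and i: "i \<in> {..<D}" and "z \<in> space U"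
    then have "b(i := z) \<in> space B"
      unfolding B_def by (auto simp: space_PiM PiE_iff extensional_def)
    with b show "\<bar>(\<integral>\<omega>. sqnorm D (\<omega>, b(i := z)) \<partial>A) - (\<integral>\<omega>. sqnorm D (\<omega>, b) \<partial>A)\<bar>
        \<le> 12 / real D * total_mass"
      using i unfolding B_def[symmetric]
      by (intro A.abs_integral_diff_le[where B="9 * total_mass"] abs_sqnorm_le abs_sqnorm_diff_le
          abs_rff_f_square_diff_phase abs_k_le_1) auto
  qed (use \<open>prob_space U\<close> A.abs_integral_le abs_sqnorm_le in \<open>auto simp: B_def[symmetric]\<close>)
  have "subgaussian (A \<Otimes>\<^sub>M B) (sqnorm D)
      ((\<Sum>i<D. (24 / real D * total_mass)\<^sup>2) + (\<Sum>i<D. (12 / real D * total_mass)\<^sup>2))"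
    using frequencies phases abs_sqnorm_le
    by (intro subgaussian_pair_measure[where B="9 * total_mass"] A.prob_space_axioms B.prob_space_axioms)
       auto
  moreover have "(\<Sum>i<D. (24 / real D * total_mass)\<^sup>2) + (\<Sum>i<D. (12 / real D * total_mass)\<^sup>2)
      = 720 * total_mass\<^sup>2 / real D"
    by (simp add: power2_eq_square field_simps)
  ultimately show ?thesis
    unfolding \<Omega> by simp
qed

end

lemma rff_exponent_bounds:
  fixes D :: nat and \<epsilon> m :: real
  assumes "D > 0"
  shows "- 2 * \<epsilon>\<^sup>2 / (720 * m\<^sup>2 / real D) \<le> - (real D ^ 3 * \<epsilon>\<^sup>2) / (512 * (real D + 1)\<^sup>2 * m\<^sup>2)"
    and "- (real D ^ 3 * \<epsilon>\<^sup>2) / (512 * (real D + 1)\<^sup>2 * m\<^sup>2) \<le> - (real D * \<epsilon>\<^sup>2) / (2048 * m\<^sup>2)"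
proof -
  define x where "x = real D"
  define q where "q = \<epsilon>\<^sup>2 / m\<^sup>2"
  have "x \<ge> 1" "q \<ge> 0"
    using assms by (simp_all add: x_def q_def)
  have cube_div: "x / c = x ^ 3 / (c * x\<^sup>2)" for c
    using \<open>x \<ge> 1\<close> by (simp add: power2_eq_square power3_eq_cube)
  have "x ^ 3 / (512 * (x + 1)\<^sup>2) \<le> x ^ 3 / (360 * x\<^sup>2)"
  proof (rule divide_left_mono)
    have "x\<^sup>2 \<le> (x + 1)\<^sup>2"
      using \<open>x \<ge> 1\<close> by (intro power_mono) auto
    then show "360 * x\<^sup>2 \<le> 512 * (x + 1)\<^sup>2"
      using zero_le_power2[of x] by linarith
  qed (use \<open>x \<ge> 1\<close> in simp_all)
  then have "x ^ 3 / (512 * (x + 1)\<^sup>2) * q \<le> x / 360 * q"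
    unfolding cube_div[of 360] using \<open>q \<ge> 0\<close> by (rule mult_right_mono)
  moreover have "x ^ 3 / (2048 * x\<^sup>2) \<le> x ^ 3 / (512 * (x + 1)\<^sup>2)"
  proof (rule divide_left_mono)
    have "(x + 1)\<^sup>2 \<le> (2 * x)\<^sup>2"
      using \<open>x \<ge> 1\<close> by (intro power_mono) auto
    then show "512 * (x + 1)\<^sup>2 \<le> 2048 * x\<^sup>2"
      by (simp add: power_mult_distrib)
  qed (use \<open>x \<ge> 1\<close> in simp_all)
  then have "x / 2048 * q \<le> x ^ 3 / (512 * (x + 1)\<^sup>2) * q"
    unfolding cube_div[of 2048] using \<open>q \<ge> 0\<close> by (rule mult_right_mono)
  moreover have "- 2 * \<epsilon>\<^sup>2 / (720 * m\<^sup>2 / x) = - (x / 360 * q)"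
    and "- (x ^ 3 * \<epsilon>\<^sup>2) / (512 * (x + 1)\<^sup>2 * m\<^sup>2) = - (x ^ 3 / (512 * (x + 1)\<^sup>2) * q)"
    and "- (x * \<epsilon>\<^sup>2) / (2048 * m\<^sup>2) = - (x / 2048 * q)"
    using \<open>x \<ge> 1\<close> by (simp_all add: q_def field_simps)
  ultimately show "- 2 * \<epsilon>\<^sup>2 / (720 * m\<^sup>2 / real D) \<le> - (real D ^ 3 * \<epsilon>\<^sup>2) / (512 * (real D + 1)\<^sup>2 * m\<^sup>2)"
    and "- (real D ^ 3 * \<epsilon>\<^sup>2) / (512 * (real D + 1)\<^sup>2 * m\<^sup>2) \<le> - (real D * \<epsilon>\<^sup>2) / (2048 * m\<^sup>2)"
    unfolding x_def[symmetric] by linarith+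
qed
theorem proposition8:
  fixes X :: "'a::euclidean_space set"
    and k :: "'a \<Rightarrow> real"
    and P :: "'a measure"
    and \<mu> :: "('a \<times> 'a) measure"
    and D :: nat
    and \<epsilon> :: real
  assumes k_cont: "continuous_on UNIV k"
    and k_pd: "positive_definite k"
    and k0: "k 0 = 1"
    and P_prob: "prob_space P"
    and P_sets: "sets P = sets borel"
    and P_bochner: "\<And>\<Delta>. complex_of_real (k \<Delta>) = (\<integral>\<omega>. cis (\<omega> \<bullet> \<Delta>) \<partial>P)"
    and mu_sets: "sets \<mu> = sets (restrict_space borel (X \<times> X))"
    and mu_sigma: "sigma_finite_measure \<mu>"
    and mu_fin: "emeasure \<mu> (X \<times> X) < \<infinity>"
    and D_pos: "0 < D"
    and eps_pos: "0 < \<epsilon>"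
  shows "let \<Omega> = rff_space P D;
             N = (\<lambda>w. sqnorm_mu \<mu> (rff_f k D w));
             M = measure \<mu> (X \<times> X)
         in measure \<Omega> {w \<in> space \<Omega>. \<bar>N w - (\<integral>w'. N w' \<partial>\<Omega>)\<bar> \<ge> \<epsilon>}
              \<le> 2 * exp (- (real D ^ 3 * \<epsilon>\<^sup>2) / (512 * (real D + 1)\<^sup>2 * M\<^sup>2))
          \<and> 2 * exp (- (real D ^ 3 * \<epsilon>\<^sup>2) / (512 * (real D + 1)\<^sup>2 * M\<^sup>2))
              \<le> 2 * exp (- (real D * \<epsilon>\<^sup>2) / (2048 * M\<^sup>2))"
proof -
  \<comment> \<open>\<open>k_pd\<close> and \<open>k0\<close> only guarantee the existence of \<open>P\<close>, which is assumed;
    \<open>mu_sigma\<close> is implied by \<open>mu_fin\<close>.\<close>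
  have space_\<mu>: "space \<mu> = X \<times> X"
    using sets_eq_imp_space_eq[OF mu_sets] by (simp add: space_restrict_space)
  interpret random_fourier_features \<mu> P k
  proof (intro random_fourier_features.intro random_fourier_features_axioms.intro)
    show "finite_measure \<mu>"
      using mu_fin space_\<mu> by (intro finite_measureI) auto
    show "k \<in> borel_measurable borel"
      using k_cont by (rule borel_measurable_continuous_onI)
    show "\<bar>k \<Delta>\<bar> \<le> 1" for \<Delta>
      using P_prob P_bochner by (rule abs_le_1_if_characteristic_function)
    have "(\<lambda>p. p) \<in> measurable (restrict_space borel (X \<times> X)) borel"
      by (rule measurable_restrict_space1) simp
    then show "(\<lambda>p. p) \<in> measurable \<mu> borel"
      unfolding measurable_cong_sets[OF mu_sets refl] .
  qed (fact P_prob P_sets)+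
  interpret \<Omega>: prob_space "rff_space P D"
    unfolding rff_space_def using P_prob
    by (intro prob_space_pair prob_space_PiM prob_space_uniform_measure) auto
  have "measure (rff_space P D) {w \<in> space (rff_space P D).
          \<bar>sqnorm D w - (\<integral>w'. sqnorm D w' \<partial>rff_space P D)\<bar> \<ge> \<epsilon>}
      \<le> 2 * exp (- 2 * \<epsilon>\<^sup>2 / (720 * total_mass\<^sup>2 / real D))"
    using abs_sqnorm_le
    by (intro subgaussian_tail[OF \<Omega>.prob_space_axioms sqnorm_measurable _ sqnorm_subgaussian _ eps_pos])
       auto
  moreover have
    "exp (- 2 * \<epsilon>\<^sup>2 / (720 * total_mass\<^sup>2 / real D))
       \<le> exp (- (real D ^ 3 * \<epsilon>\<^sup>2) / (512 * (real D + 1)\<^sup>2 * total_mass\<^sup>2))"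
    "exp (- (real D ^ 3 * \<epsilon>\<^sup>2) / (512 * (real D + 1)\<^sup>2 * total_mass\<^sup>2))
       \<le> exp (- (real D * \<epsilon>\<^sup>2) / (2048 * total_mass\<^sup>2))"
    using rff_exponent_bounds[OF D_pos] by (simp_all only: exp_le_cancel_iff)
  ultimately show ?thesis
    unfolding Let_def space_\<mu> by linarith
qed

end
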